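(* Let $a,c>0$ and $b,d<0$ be real numbers with $x_A=x_B$, and let $W_0(z)=1$, $W_1(z)=z$, $W_n(z)=(az+b)W_{n-1}(z)+(cz+d)W_{n-2}(z)$ for $n\ge2$. Then for every $n\ge0$ the function $U_n(z)=W_n(z)/A(z)^{\lfloor n/2\rfloor}$ is a polynomial (of degree $\lceil n/2\rceil$), all of whose zeros are real and lie in the open interval $(u,x_B)$. Moreover, this interval is sharp: both $u$ and $x_B$ are limits of zeros of the polynomials $U_n(z)$.
   Context: Notation: $A(z)=az+b$, $B(z)=cz+d$, $x_A=-b/a$, $x_B=-d/c$, $\Delta_\Delta=c^2-a^2B(x_A)$, $x_\Delta^\pm=x_A+\frac{-2c\pm2\sqrt{\Delta_\Delta}}{a^2}$, $g(z)=(1-a)z^2-(b+c)z-d$, $\Delta_g=(b+c)^2+4d(1-a)$, $F=\Delta_g-\Delta_\Delta=d(a-2)^2+bc(2-a)+b^2$. The zeros of $g$ are $x_g^\pm=\frac{b+c}{2(1-a)}\pm\frac{\sqrt{\Delta_g}}{2|1-a|}$ if $a\neq1$, and $x_g^\pm=-d/(b+c)$ if $a=1$ and $b+c\ne0$. Define $u=x_\Delta^-$ if $a<2$ and $F\le0$; $u=x_g^+$ if $a<1$ and $F>0$; $u=x_g^-$ otherwise. A number $z^*$ is a limit of zeros of $\{U_n\}$ if there exist zeros $z_n$ of $U_n$ with $z_n\to z^*$. *)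

theory Defs
  imports "HOL-Analysis.Analysis" "HOL-Computational_Algebra.Polynomial"
begin

fun Wpoly :: "real \<Rightarrow> real \<Rightarrow> real \<Rightarrow> real \<Rightarrow> nat \<Rightarrow> complex poly" where
  "Wpoly a b c d 0 = 1"
| "Wpoly a b c d (Suc 0) = [:0, 1:]"
| "Wpoly a b c d (Suc (Suc n)) =
     [:complex_of_real b, complex_of_real a:] * Wpoly a b c d (Suc n)
   + [:complex_of_real d, complex_of_real c:] * Wpoly a b c d n"

definition Apoly :: "real \<Rightarrow> real \<Rightarrow> complex poly" where
  "Apoly a b = [:complex_of_real b, complex_of_real a:]"

definition Upoly :: "real \<Rightarrow> real \<Rightarrow> real \<Rightarrow> real \<Rightarrow> nat \<Rightarrow> complex poly" where
  "Upoly a b c d n = Wpoly a b c d n div (Apoly a b) ^ (n div 2)"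

definition xA :: "real \<Rightarrow> real \<Rightarrow> real" where "xA a b = - b / a"
definition xB :: "real \<Rightarrow> real \<Rightarrow> real" where "xB c d = - d / c"

definition DeltaDelta :: "real \<Rightarrow> real \<Rightarrow> real \<Rightarrow> real \<Rightarrow> real" where
  "DeltaDelta a b c d = c^2 - a^2 * (c * xA a b + d)"

definition xDelta_minus :: "real \<Rightarrow> real \<Rightarrow> real \<Rightarrow> real \<Rightarrow> real" where
  "xDelta_minus a b c d = xA a b + (- 2 * c - 2 * sqrt (DeltaDelta a b c d)) / a^2"

definition Delta_g :: "real \<Rightarrow> real \<Rightarrow> real \<Rightarrow> real \<Rightarrow> real" where
  "Delta_g a b c d = (b + c)^2 + 4 * d * (1 - a)"

definition Fval :: "real \<Rightarrow> real \<Rightarrow> real \<Rightarrow> real \<Rightarrow> real" where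
  "Fval a b c d = d * (a - 2)^2 + b * c * (2 - a) + b^2"

text \<open>Zeros of g(z) = (1-a)z^2 - (b+c)z - d. (When a = 1 and b + c = 0 the
  value is irrelevant for u.)\<close>
definition xg_plus :: "real \<Rightarrow> real \<Rightarrow> real \<Rightarrow> real \<Rightarrow> real" where
  "xg_plus a b c d = (if a \<noteq> 1
     then (b + c) / (2 * (1 - a)) + sqrt (Delta_g a b c d) / (2 * \<bar>1 - a\<bar>)
     else - d / (b + c))"

definition xg_minus :: "real \<Rightarrow> real \<Rightarrow> real \<Rightarrow> real \<Rightarrow> real" where
  "xg_minus a b c d = (if a \<noteq> 1
     then (b + c) / (2 * (1 - a)) - sqrt (Delta_g a b c d) / (2 * \<bar>1 - a\<bar>)
     else - d / (b + c))"

definition uval :: "real \<Rightarrow> real \<Rightarrow> real \<Rightarrow> real \<Rightarrow> real" where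
  "uval a b c d =
     (if a < 2 \<and> Fval a b c d \<le> 0 then xDelta_minus a b c d
      else if a < 1 \<and> Fval a b c d > 0 then xg_plus a b c d
      else xg_minus a b c d)"

definition limit_of_zeros :: "(nat \<Rightarrow> complex poly) \<Rightarrow> complex \<Rightarrow> bool" where
  "limit_of_zeros U w \<longleftrightarrow>
     (\<exists>z :: nat \<Rightarrow> complex. (\<forall>n\<ge>1. poly (U n) (z n) = 0) \<and> z \<longlonglongrightarrow> w)"

end

theory Submission
  imports Defs
begin

text \<open>Since \<open>x\<^sub>A = x\<^sub>B\<close>, we have \<open>B = k A\<close> with \<open>k = c/a\<close>, and
  \<open>W\<^sub>n = A\<^bsup>\<lfloor>n/2\<rfloor>\<^esup> U\<^sub>n\<close>, where \<open>U\<^sub>n\<^sub>+\<^sub>2 = U\<^sub>n\<^sub>+\<^sub>1 + k U\<^sub>n\<close> for even \<open>n\<close>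
  and \<open>U\<^sub>n\<^sub>+\<^sub>2 = A U\<^sub>n\<^sub>+\<^sub>1 + k U\<^sub>n\<close> for odd \<open>n\<close>.
  The zeros of \<open>U\<^sub>n\<close> and \<open>U\<^sub>n\<^sub>-\<^sub>1\<close> interlace in \<open>(u, x\<^sub>B)\<close>: at a zero of \<open>U\<^sub>n\<close>
  we have \<open>U\<^sub>n\<^sub>+\<^sub>1 = k U\<^sub>n\<^sub>-\<^sub>1\<close>, so the intermediate value theorem places one zero of
  \<open>U\<^sub>n\<^sub>+\<^sub>1\<close> between consecutive zeros of \<open>U\<^sub>n\<close>, the outer ones being supplied by the
  signs at the ends, \<open>U\<^sub>n(x\<^sub>B) > 0\<close> and \<open>(-1)\<^bsup>\<lceil>n/2\<rceil>\<^esup> U\<^sub>n(u) > 0\<close>; the degree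
  bound \<open>\<lceil>n/2\<rceil>\<close> shows these are all the zeros.
  The sign condition at \<open>u\<close> is positivity of the sequences
  \<open>p\<^sub>m = (-1)\<^sup>m U\<^sub>2\<^sub>m(u)\<close>, \<open>q\<^sub>m = (-1)\<^bsup>m+1\<^esup> U\<^sub>2\<^sub>m\<^sub>+\<^sub>1(u)\<close>, which obey a coupled linear
  recurrence whose characteristic quadratic has a root \<open>\<le> -u\<close> precisely by the choice
  of \<open>u\<close>. Right of \<open>u\<close> that quadratic stays away from \<open>0\<close> and positivity fails,
  producing zeros arbitrarily close to \<open>u\<close>; near \<open>x\<^sub>B\<close>, \<open>U\<^sub>2\<^sub>m\<close> is a Chebyshev
  polynomial in disguise and is negative at \<open>x\<^sub>B - (2k/a)(1 - cos(\<pi>/m))\<close>.\<close>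

lemma strict_mono_on_lessThanI:
  fixes t :: "nat \<Rightarrow> 'a::order"
  assumes step: "\<And>j. Suc j < n \<Longrightarrow> t j < t (Suc j)"
  shows "strict_mono_on {..<n} t"
proof (rule strict_mono_onI)
  fix i j :: nat assume "j \<in> {..<n}" "i < j"
  then show "t i < t j"
  proof (induction j)
    case (Suc j)
    then have "t j < t (Suc j)" by (simp add: step)
    moreover have "i < j \<Longrightarrow> t i < t j" using Suc by simp
    ultimately show ?case using Suc.prems(2) by (metis less_Suc_eq order.strict_trans)
  qed simp
qed

lemma poly_roots_eq_if_card_ge_degree:
  fixes p :: "'a::idom poly"
  assumes "p \<noteq> 0" "finite R" "R \<subseteq> {x. poly p x = 0}" "degree p \<le> card R"
  shows "{x. poly p x = 0} = R"
proof -
  have "card {x. poly p x = 0} \<le> card R"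
    using card_poly_roots_bound[OF assms(1)] assms(4) by linarith
  then show ?thesis
    using card_seteq[OF poly_roots_finite[OF assms(1)] assms(3)] by simp
qed

lemma poly_same_sign_if_no_root:
  fixes p :: "real poly"
  assumes "\<And>z. min x y \<le> z \<Longrightarrow> z \<le> max x y \<Longrightarrow> poly p z \<noteq> 0"
  shows "poly p x * poly p y > 0"
proof (rule ccontr)
  assume "\<not> poly p x * poly p y > 0"
  moreover have "poly p x \<noteq> 0" "poly p y \<noteq> 0" using assms by auto
  ultimately have neg: "poly p (min x y) * poly p (max x y) < 0"
    by (auto simp: min_def max_def mult.commute linorder_not_less order.order_iff_strict)
  then have "min x y \<noteq> max x y" by (metis not_square_less_zero)
  then have "min x y < max x y" by (auto simp: min_def max_def split: if_splits)
  with neg obtain z where "min x y < z" "z < max x y" "poly p z = 0"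
    using poly_IVT by blast
  then show False using assms by auto
qed

text \<open>For the ratio \<open>\<rho>\<^sub>m = q\<^sub>m / p\<^sub>m\<close> the recurrence reads
  \<open>\<rho>\<^sub>m\<^sub>+\<^sub>1 = \<rho>\<^sub>m - h(\<rho>\<^sub>m) / (\<rho>\<^sub>m - k)\<close> with \<open>h(\<rho>) = \<rho>\<^sup>2 - \<alpha>\<rho> + \<alpha>k\<close>:
  a root of \<open>h\<close> below \<open>\<rho>\<^sub>0\<close> keeps \<open>\<rho>\<close> from decreasing past it, while
  \<open>h \<ge> c > 0\<close> pushes \<open>\<rho>\<close> down by a fixed amount per step until positivity fails.\<close>

locale coupled_recurrence =
  fixes p q :: "nat \<Rightarrow> real" and k \<alpha> :: real
  assumes p_0: "p 0 = 1"
    and p_Suc: "\<And>m. p (Suc m) = q m - k * p m"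
    and q_Suc: "\<And>m. q (Suc m) = \<alpha> * p (Suc m) - k * q m"
    and k_pos: "k > 0" and \<alpha>_pos: "\<alpha> > 0"
begin

lemma positive_if_root_below:
  assumes root: "r\<^sup>2 - \<alpha> * r + \<alpha> * k = 0" and q0: "r \<le> q 0"
  shows "p m > 0 \<and> q m > 0"
proof -
  have ar: "r * (\<alpha> - r) = \<alpha> * k" using root by (simp add: algebra_simps power2_eq_square)
  have "r \<noteq> 0" using ar k_pos \<alpha>_pos by auto
  moreover have "\<alpha> * (r - k) = r\<^sup>2" using root by (simp add: algebra_simps)
  ultimately have "\<alpha> * (r - k) > 0" by simp
  then have rk: "r > k" using \<alpha>_pos by (simp add: zero_less_mult_iff)
  have "r * (\<alpha> - r) > 0" using ar k_pos \<alpha>_pos by simp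
  then have r\<alpha>: "\<alpha> - r > 0" using rk k_pos by (simp add: zero_less_mult_iff)
  have "p m > 0 \<and> r * p m \<le> q m" for m
  proof (induction m)
    case 0 then show ?case using p_0 q0 by simp
  next
    case (Suc m)
    have "p (Suc m) \<ge> (r - k) * p m" using p_Suc[of m] Suc by (simp add: algebra_simps)
    moreover have "(r - k) * p m > 0" using rk Suc by simp
    ultimately have p: "p (Suc m) > 0" by linarith
    have "r * (q (Suc m) - r * p (Suc m)) = r * (\<alpha> - r) * p (Suc m) - r * k * q m"
      unfolding q_Suc by (simp add: algebra_simps)
    also have "\<dots> = k * ((\<alpha> - r) * q m - r * (\<alpha> - r) * p m)"
      unfolding ar p_Suc by (simp add: algebra_simps)
    also have "\<dots> = k * (\<alpha> - r) * (q m - r * p m)" by (simp add: algebra_simps)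
    finally have "r * (q (Suc m) - r * p (Suc m)) = k * (\<alpha> - r) * (q m - r * p m)" .
    moreover have "k * (\<alpha> - r) * (q m - r * p m) \<ge> 0" using k_pos r\<alpha> Suc by simp
    ultimately have "r * (q (Suc m) - r * p (Suc m)) \<ge> 0" by simp
    then have "q (Suc m) - r * p (Suc m) \<ge> 0" using rk k_pos by (simp add: zero_le_mult_iff)
    then show ?case using p by simp
  qed
  then show ?thesis using rk k_pos by (smt (verit) mult_pos_pos)
qed

lemma not_always_positive:
  assumes c: "c > 0"
    and h: "\<And>\<rho>. k < \<rho> \<Longrightarrow> \<rho> \<le> q 0 \<Longrightarrow> \<rho>\<^sup>2 - \<alpha> * \<rho> + \<alpha> * k \<ge> c"
  shows "\<exists>m. p m \<le> 0 \<or> q m \<le> 0"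
proof (rule ccontr)
  assume "\<not> ?thesis"
  then have pos: "\<And>m. p m > 0" "\<And>m. q m > 0" by (auto simp: not_le)
  define \<rho> where "\<rho> m = q m / p m" for m
  have q_eq: "q m = \<rho> m * p m" for m using pos(1)[of m] by (simp add: \<rho>_def)
  have \<rho>k: "\<rho> m > k" for m
  proof -
    have "(\<rho> m - k) * p m > 0" using pos(1)[of "Suc m"] p_Suc[of m] q_eq[of m]
      by (simp add: algebra_simps)
    then show ?thesis using pos(1)[of m] by (simp add: zero_less_mult_iff)
  qed
  have \<rho>_Suc: "\<rho> (Suc m) = \<rho> m - (\<rho> m ^ 2 - \<alpha> * \<rho> m + \<alpha> * k) / (\<rho> m - k)" for m
  proof -
    have ps: "p (Suc m) = p m * (\<rho> m - k)" using p_Suc[of m] q_eq[of m] by (simp add: algebra_simps)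
    have "\<rho> m - k \<noteq> 0" "p m \<noteq> 0" using \<rho>k[of m] pos(1)[of m] by auto
    then show ?thesis
      unfolding \<rho>_def[of "Suc m"] q_Suc ps q_eq[of m] by (simp add: field_simps power2_eq_square)
  qed
  have \<rho>0: "\<rho> 0 = q 0" using p_0 by (simp add: \<rho>_def)
  define \<delta> where "\<delta> = c / (q 0 - k)"
  have \<delta>: "\<delta> > 0" using c \<rho>k[of 0] \<rho>0 by (simp add: \<delta>_def)
  have bound: "\<rho> m \<le> q 0 - real m * \<delta>" for m
  proof (induction m)
    case 0 then show ?case using \<rho>0 by simp
  next
    case (Suc m)
    have le: "\<rho> m \<le> q 0" using Suc \<delta> by (smt (verit) mult_nonneg_nonneg of_nat_0_le_iff)
    have "\<delta> \<le> (\<rho> m ^ 2 - \<alpha> * \<rho> m + \<alpha> * k) / (\<rho> m - k)"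
      unfolding \<delta>_def by (rule frac_le) (use c h[OF \<rho>k le] \<rho>k[of m] le in auto)
    then show ?case using Suc \<rho>_Suc[of m] by (simp add: algebra_simps)
  qed
  obtain m where "q 0 - k < real m * \<delta>" using ex_less_of_nat_mult[OF \<delta>] by blast
  then show False using bound[of m] \<rho>k[of m] by simp
qed

end

fun chebyshev :: "nat \<Rightarrow> real \<Rightarrow> real" where
  "chebyshev 0 t = 0"
| "chebyshev (Suc 0) t = 1"
| "chebyshev (Suc (Suc n)) t = t * chebyshev (Suc n) t - chebyshev n t"

lemma chebyshev_cos: "chebyshev n (2 * cos \<theta>) * sin \<theta> = sin (real n * \<theta>)"
proof (induction n "2 * cos \<theta>" rule: chebyshev.induct)
  case (3 n)
  have "sin (y + \<theta>) + sin (y - \<theta>) = 2 * cos \<theta> * sin y" for y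
    by (simp add: sin_add sin_diff)
  from this[of "real (Suc n) * \<theta>"] show ?case
    using 3 by (simp add: algebra_simps)
qed simp_all

lemma chebyshev_solution:
  assumes "\<And>m. x (Suc (Suc m)) = t * x (Suc m) - x m"
  shows "x m = x 0 * chebyshev (Suc m) t + (x 1 - t * x 0) * chebyshev m t"
proof (induction m rule: induct_nat_012)
  case (ge2 m)
  show ?case by (subst assms) (simp only: ge2 chebyshev.simps; simp add: algebra_simps)
qed simp_all

locale alternating_recurrence =
  fixes a b k :: real
  assumes a_pos: "a > 0" and b_neg: "b < 0" and k_pos: "k > 0"
begin

text \<open>\<open>U\<close> is generic in the coefficient field, so that its real and complex
  versions are the same function.\<close>

fun U :: "nat \<Rightarrow> 'a::real_field poly" where
  "U 0 = 1"
| "U (Suc 0) = [:0, 1:]"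
| "U (Suc (Suc n)) =
     (if even n then 1 else [:of_real b, of_real a:]) * U (Suc n) + smult (of_real k) (U n)"

definition x0 :: real where "x0 = - b / a"

lemma x0_pos: "x0 > 0"
  using a_pos b_neg by (simp add: x0_def divide_neg_pos)

lemma A_factor: "a * y + b = a * (y - x0)"
  using a_pos by (simp add: x0_def algebra_simps)

lemma poly_U_Suc_Suc:
  "poly (U (Suc (Suc n))) (y::real) =
     (if even n then 1 else a * y + b) * poly (U (Suc n)) y + k * poly (U n) y"
  by (simp add: algebra_simps)

lemma poly_U_of_real: "poly (U n) (of_real x :: 'a::real_field) = of_real (poly (U n) x)"
  by (induction n rule: U.induct) (auto simp: algebra_simps)

lemma degree_U_le: "degree (U n :: 'a::real_field poly) \<le> (n + 1) div 2"
proof (induction n rule: U.induct)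
  case (3 n)
  let ?A = "[:of_real b, of_real a:] :: 'a poly"
  have "degree (smult (of_real k) (U n) :: 'a poly) \<le> (n + 3) div 2"
    using 3 degree_smult_le[of "of_real k" "U n :: 'a poly"] by linarith
  moreover have "degree ((if even n then 1 else ?A) * U (Suc n)) \<le> (n + 3) div 2"
  proof (cases "even n")
    case True
    then show ?thesis using 3 by simp
  next
    case False
    have "degree (?A * U (Suc n)) \<le> degree ?A + degree (U (Suc n) :: 'a poly)"
      by (rule degree_mult_le)
    also have "\<dots> \<le> 1 + (n + 2) div 2"
      using 3 by (intro add_mono) (simp_all add: degree_pCons_le)
    also have "\<dots> = (n + 3) div 2" using False by presburger
    finally show ?thesis unfolding if_not_P[OF False] .
  qed
  ultimately show ?case by (simp add: degree_add_le)
qed simp_all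

lemma poly_U_x0_pos: "poly (U n) x0 > 0"
proof -
  have "poly (U n) x0 > 0 \<and> poly (U (Suc n)) x0 > 0" for n
    by (induction n) (use x0_pos k_pos A_factor[of x0] in
      \<open>auto simp: poly_U_Suc_Suc simp del: U.simps(3) intro!: add_pos_pos mult_pos_pos\<close>)
  then show ?thesis by blast
qed

lemma U_nonzero: "U n \<noteq> (0 :: 'a::real_field poly)"
proof
  assume "U n = (0 :: 'a poly)"
  then have "poly (U n) (of_real x0 :: 'a) = 0" by simp
  then show False using poly_U_x0_pos[of n] by (simp add: poly_U_of_real)
qed

lemma coupled_recurrence_at:
  assumes "y < x0"
  shows "coupled_recurrence (\<lambda>m. (-1) ^ m * poly (U (2 * m)) y)
           (\<lambda>m. (-1) ^ Suc m * poly (U (Suc (2 * m))) y) k (a * (x0 - y))"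
proof
  have e: "2 * Suc m = Suc (Suc (2 * m))" "Suc (2 * Suc m) = Suc (Suc (Suc (2 * m)))" for m
    by simp_all
  fix m
  show "(-1) ^ Suc m * poly (U (2 * Suc m)) y =
      (-1) ^ Suc m * poly (U (Suc (2 * m))) y - k * ((-1) ^ m * poly (U (2 * m)) y)"
    unfolding e poly_U_Suc_Suc by (simp add: algebra_simps)
  show "(-1) ^ Suc (Suc m) * poly (U (Suc (2 * Suc m))) y =
      a * (x0 - y) * ((-1) ^ Suc m * poly (U (2 * Suc m)) y)
      - k * ((-1) ^ Suc m * poly (U (Suc (2 * m))) y)"
    unfolding e poly_U_Suc_Suc[of "Suc (2 * m)"] A_factor by (simp add: algebra_simps)
qed (use assms k_pos a_pos in simp_all)

text \<open>\<open>U\<^sub>n\<close> has degree \<open>\<lceil>n/2\<rceil>\<close> and positive leading coefficient, so at a point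
  left of all zeros its sign is \<open>(-1)\<^bsup>\<lceil>n/2\<rceil>\<^esup>\<close>.\<close>

definition alternating_at :: "real \<Rightarrow> bool" where
  "alternating_at y \<longleftrightarrow> (\<forall>n. (-1) ^ ((n + 1) div 2) * poly (U n) y > 0)"

lemma alternating_at_iff:
  "alternating_at y \<longleftrightarrow>
     (\<forall>m. (-1) ^ m * poly (U (2 * m)) y > 0 \<and> (-1) ^ Suc m * poly (U (Suc (2 * m))) y > 0)"
    (is "_ \<longleftrightarrow> (\<forall>m. ?P m)")
proof
  assume H: "alternating_at y"
  show "\<forall>m. ?P m"
  proof
    fix m
    have "(2 * m + 1) div 2 = m" "(Suc (2 * m) + 1) div 2 = Suc m" by presburger+
    then show "?P m" using H[unfolded alternating_at_def, rule_format, of "2 * m"]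
        H[unfolded alternating_at_def, rule_format, of "Suc (2 * m)"] by simp
  qed
next
  assume H: "\<forall>m. ?P m"
  show "alternating_at y" unfolding alternating_at_def
  proof
    fix n :: nat
    have "\<exists>m. n = 2 * m \<or> n = Suc (2 * m)" by presburger
    then obtain m where "n = 2 * m \<or> n = Suc (2 * m)" ..
    then show "(-1) ^ ((n + 1) div 2) * poly (U n) y > 0"
    proof
      assume "n = 2 * m"
      moreover have "(2 * m + 1) div 2 = m" by presburger
      ultimately show ?thesis using H by simp
    next
      assume "n = Suc (2 * m)"
      moreover have "(Suc (2 * m) + 1) div 2 = Suc m" by presburger
      ultimately show ?thesis using H by simp
    qed
  qed
qed

lemma alternating_at_if_root_below:
  assumes "y < x0" and "r\<^sup>2 - a * (x0 - y) * r + a * (x0 - y) * k = 0" and "r \<le> - y"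
  shows "alternating_at y"
proof -
  interpret coupled_recurrence "\<lambda>m. (-1) ^ m * poly (U (2 * m)) y"
    "\<lambda>m. (-1) ^ Suc m * poly (U (Suc (2 * m))) y" k "a * (x0 - y)"
    using coupled_recurrence_at[OF assms(1)] .
  show ?thesis
    unfolding alternating_at_iff using positive_if_root_below[OF assms(2)] assms(3) by simp
qed

lemma not_alternating_at:
  assumes "y < x0" and "c > 0"
    and "\<And>\<rho>. k < \<rho> \<Longrightarrow> \<rho> \<le> - y \<Longrightarrow> \<rho>\<^sup>2 - a * (x0 - y) * \<rho> + a * (x0 - y) * k \<ge> c"
  shows "\<not> alternating_at y"
proof -
  interpret coupled_recurrence "\<lambda>m. (-1) ^ m * poly (U (2 * m)) y"
    "\<lambda>m. (-1) ^ Suc m * poly (U (Suc (2 * m))) y" k "a * (x0 - y)"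
    using coupled_recurrence_at[OF assms(1)] .
  have "\<exists>m. (-1) ^ m * poly (U (2 * m)) y \<le> 0 \<or> (-1) ^ Suc m * poly (U (Suc (2 * m))) y \<le> 0"
    by (rule not_always_positive[OF assms(2)]) (use assms(3) in simp)
  then show ?thesis unfolding alternating_at_iff using not_less by blast
qed

lemma poly_U_even_Suc_Suc:
  "poly (U (2 * Suc (Suc m))) y =
     (a * y + b + 2 * k) * poly (U (2 * Suc m)) y - k\<^sup>2 * poly (U (2 * m)) (y::real)"
proof -
  have e: "2 * Suc (Suc m) = Suc (Suc (Suc (Suc (2 * m))))" "2 * Suc m = Suc (Suc (2 * m))"
    by simp_all
  have "poly (U (Suc (Suc (2 * m)))) y = poly (U (Suc (2 * m))) y + k * poly (U (2 * m)) y"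
    using poly_U_Suc_Suc[of "2 * m" y] by simp
  then show ?thesis
    unfolding e poly_U_Suc_Suc[of "Suc (Suc (2 * m))"] poly_U_Suc_Suc[of "Suc (2 * m)"]
    by (simp add: algebra_simps power2_eq_square)
qed

lemma poly_U_even_chebyshev:
  fixes y :: real
  defines "\<tau> \<equiv> (a * y + b + 2 * k) / k"
  shows "poly (U (2 * m)) y = k ^ m * (chebyshev (Suc m) \<tau> + ((y + k) / k - \<tau>) * chebyshev m \<tau>)"
proof -
  define x where "x m = poly (U (2 * m)) y / k ^ m" for m
  have "x (Suc (Suc m)) = \<tau> * x (Suc m) - x m" for m
    unfolding x_def poly_U_even_Suc_Suc \<tau>_def using k_pos
    by (simp add: field_simps power2_eq_square)
  from chebyshev_solution[of x \<tau>, OF this]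
  have "x m = chebyshev (Suc m) \<tau> + ((y + k) / k - \<tau>) * chebyshev m \<tau>"
    by (simp add: x_def numeral_2_eq_2)
  then show ?thesis using k_pos by (simp add: x_def field_simps)
qed

text \<open>At these points \<open>\<tau> = 2 cos (\<pi>/m)\<close>, so that \<open>U\<^sub>2\<^sub>m = -k\<^sup>m\<close>.\<close>

definition chebyshev_node :: "nat \<Rightarrow> real" where
  "chebyshev_node m = x0 - 2 * k / a * (1 - cos (pi / real m))"

lemma poly_U_chebyshev_node_neg:
  assumes "m \<ge> 2"
  shows "poly (U (2 * m)) (chebyshev_node m) < 0"
proof -
  define \<theta> where "\<theta> = pi / real m"
  have "0 < \<theta>" "\<theta> < pi" using assms by (auto simp: \<theta>_def field_simps)
  then have sin: "sin \<theta> > 0" by (rule sin_gt_zero)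
  have "a * chebyshev_node m + b = - 2 * k * (1 - cos \<theta>)"
    unfolding A_factor using a_pos by (simp add: chebyshev_node_def \<theta>_def)
  then have \<tau>: "(a * chebyshev_node m + b + 2 * k) / k = 2 * cos \<theta>"
    using k_pos by (simp add: field_simps)
  have m\<theta>: "real m * \<theta> = pi" using assms by (simp add: \<theta>_def)
  have "chebyshev m (2 * cos \<theta>) = 0"
    using chebyshev_cos[of m \<theta>] m\<theta> sin by simp
  moreover have "(chebyshev (Suc m) (2 * cos \<theta>) + 1) * sin \<theta> = 0"
    using chebyshev_cos[of "Suc m" \<theta>] m\<theta> by (simp add: distrib_right sin_add)
  then have "chebyshev (Suc m) (2 * cos \<theta>) = -1" using sin by simp
  ultimately show ?thesis
    using poly_U_even_chebyshev[where y = "chebyshev_node m" and m = m] k_pos by (simp add: \<tau>)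
qed

lemma exists_root_above_chebyshev_node:
  assumes "m \<ge> 2"
  shows "\<exists>r. chebyshev_node m < r \<and> r < x0 \<and> poly (U (2 * m)) r = 0"
proof -
  have "chebyshev_node m \<le> x0"
    using k_pos a_pos cos_le_one[of "pi / real m"] by (simp add: chebyshev_node_def)
  moreover have "chebyshev_node m \<noteq> x0"
    using poly_U_chebyshev_node_neg[OF assms] poly_U_x0_pos[of "2 * m"] by auto
  ultimately show ?thesis
    using poly_IVT_pos[OF _ poly_U_chebyshev_node_neg[OF assms] poly_U_x0_pos] by fastforce
qed

lemma chebyshev_node_tendsto: "chebyshev_node \<longlonglongrightarrow> x0"
proof -
  have "(\<lambda>m. x0 - 2 * k / a * (1 - cos (pi / real m))) \<longlonglongrightarrow> x0 - 2 * k / a * (1 - cos 0)"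
    by (intro tendsto_intros tendsto_divide_0[OF tendsto_const] filterlim_real_sequentially)
  then show ?thesis by (simp add: chebyshev_node_def[abs_def])
qed

end

locale alternating_recurrence_lower_bound = alternating_recurrence +
  fixes u :: real
  assumes u_less_x0: "u < x0" and alternating_u: "alternating_at u"
begin

lemma sign_U_u: "(-1) ^ ((n + 1) div 2) * poly (U n) u > 0"
  using alternating_u unfolding alternating_at_def by blast

lemma u_neg: "u < 0"
  using sign_U_u[of 1] by simp

text \<open>\<open>t\<close> lists the zeros of \<open>U\<^sub>n\<close> (even positions) and of \<open>U\<^sub>n\<^sub>-\<^sub>1\<close>
  (odd positions) in increasing order; the sign conditions say that \<open>t\<^sub>j\<close> has
  \<open>\<lfloor>(n - j)/2\<rfloor>\<close> zeros of the other polynomial to its right.\<close>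

definition interlaced :: "nat \<Rightarrow> (nat \<Rightarrow> real) \<Rightarrow> bool" where
  "interlaced n t \<longleftrightarrow> strict_mono_on {..<n} t \<and> (\<forall>j<n. u < t j \<and> t j < x0) \<and>
     (\<forall>j<n. even j \<longrightarrow>
        poly (U n) (t j) = 0 \<and> (-1) ^ ((n - j) div 2) * poly (U (n - 1)) (t j) > 0) \<and>
     (\<forall>j<n. odd j \<longrightarrow>
        poly (U (n - 1)) (t j) = 0 \<and> (-1) ^ ((n - j) div 2) * poly (U n) (t j) > 0)"

lemma
  assumes "interlaced n t"
  shows interlaced_mono: "strict_mono_on {..<n} t"
    and interlaced_range: "j < n \<Longrightarrow> u < t j \<and> t j < x0"
    and interlaced_even: "j < n \<Longrightarrow> even j \<Longrightarrow>
      poly (U n) (t j) = 0 \<and> (-1) ^ ((n - j) div 2) * poly (U (n - 1)) (t j) > 0"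
    and interlaced_odd: "j < n \<Longrightarrow> odd j \<Longrightarrow>
      poly (U (n - 1)) (t j) = 0 \<and> (-1) ^ ((n - j) div 2) * poly (U n) (t j) > 0"
  using assms unfolding interlaced_def by blast+

lemma interlaced_roots:
  assumes t: "interlaced n t" and n: "n \<ge> 1"
  shows "{x. poly (U n) x = 0} = (\<lambda>i. t (2 * i)) ` {..<(n + 1) div 2}"
    and "{x. poly (U (n - 1)) x = 0} = (\<lambda>i. t (Suc (2 * i))) ` {..<n div 2}"
    and "card {x::real. poly (U n) x = 0} = (n + 1) div 2"
proof -
  have inj: "inj_on t {..<n}" by (rule strict_mono_on_imp_inj_on[OF interlaced_mono[OF t]])
  have inj_even: "inj_on (\<lambda>i. t (2 * i)) {..<(n + 1) div 2}"
  proof (rule inj_onI)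
    fix i j assume "i \<in> {..<(n + 1) div 2}" "j \<in> {..<(n + 1) div 2}" "t (2 * i) = t (2 * j)"
    moreover from this have "2 * i \<in> {..<n}" "2 * j \<in> {..<n}" by auto
    ultimately show "i = j" using inj_onD[OF inj] by fastforce
  qed
  then show even: "{x. poly (U n) x = 0} = (\<lambda>i. t (2 * i)) ` {..<(n + 1) div 2}"
    using interlaced_even[OF t] degree_U_le[of n]
    by (intro poly_roots_eq_if_card_ge_degree U_nonzero) (auto simp: card_image)
  show "card {x::real. poly (U n) x = 0} = (n + 1) div 2"
    unfolding even card_image[OF inj_even] by simp
  have "inj_on (\<lambda>i. t (Suc (2 * i))) {..<n div 2}"
  proof (rule inj_onI)
    fix i j assume "i \<in> {..<n div 2}" "j \<in> {..<n div 2}" "t (Suc (2 * i)) = t (Suc (2 * j))"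
    moreover from this have "Suc (2 * i) \<in> {..<n}" "Suc (2 * j) \<in> {..<n}" by auto
    ultimately show "i = j" using inj_onD[OF inj] by fastforce
  qed
  moreover have "(n - 1 + 1) div 2 = n div 2" using n by simp
  ultimately show "{x. poly (U (n - 1)) x = 0} = (\<lambda>i. t (Suc (2 * i))) ` {..<n div 2}"
    using interlaced_odd[OF t] degree_U_le[of "n - 1"]
    by (intro poly_roots_eq_if_card_ge_degree U_nonzero) (auto simp: card_image)
qed

lemma interlaced_one: "interlaced 1 (\<lambda>_. 0)"
  unfolding interlaced_def using u_neg x0_pos by (auto simp: strict_mono_on_def)

end

locale interlacing_step = alternating_recurrence_lower_bound +
  fixes n :: nat and t :: "nat \<Rightarrow> real"
  assumes n_pos: "n \<ge> 1" and interlaced_t: "interlaced n t"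
begin

definition N :: nat where "N = (n + 2) div 2"

text \<open>The \<open>i\<close>-th zero of \<open>U\<^sub>n\<^sub>+\<^sub>1\<close> is found in the bracket \<open>(lo i, hi i)\<close>
  between consecutive zeros of \<open>U\<^sub>n\<close>, with \<open>u\<close> and \<open>x0\<close> as outer ends.\<close>

definition lo :: "nat \<Rightarrow> real" where "lo i = (if i = 0 then u else t (2 * i - 2))"

definition hi :: "nat \<Rightarrow> real" where "hi i = (if 2 * i < n then t (2 * i) else x0)"

lemma double_le_n: "i < N \<Longrightarrow> 2 * i \<le> n"
  unfolding N_def by presburger

lemma t_less_iff: "i < n \<Longrightarrow> j < n \<Longrightarrow> t i < t j \<longleftrightarrow> i < j"
  using strict_mono_on_less[OF interlaced_mono[OF interlaced_t]] by simp

lemma poly_U_Suc_n: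
  "poly (U (Suc n)) y = (if odd n then 1 else a * y + b) * poly (U n) y + k * poly (U (n - 1)) y"
  using n_pos poly_U_Suc_Suc[of "n - 1" y] by (cases n) auto

lemma sign_U_Suc_at_even:
  assumes "j < n" "even j"
  shows "(-1) ^ ((n - j) div 2) * poly (U (Suc n)) (t j) > 0"
  using interlaced_even[OF interlaced_t assms] k_pos
  by (simp add: poly_U_Suc_n mult.left_commute)

lemma lo_sign:
  assumes "i < N"
  shows "(-1) ^ (N - i) * poly (U (Suc n)) (lo i) > 0"
proof (cases "i = 0")
  case True
  then show ?thesis using sign_U_u[of "Suc n"] by (simp add: lo_def N_def)
next
  case False
  have j: "2 * i - 2 < n" "even (2 * i - 2)" and e: "(n - (2 * i - 2)) div 2 = N - i"
    using double_le_n[OF assms] False n_pos unfolding N_def by auto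
  show ?thesis using sign_U_Suc_at_even[OF j] False unfolding e by (simp add: lo_def)
qed

lemma hi_sign:
  assumes "i < N"
  shows "(-1) ^ (N - i) * poly (U (Suc n)) (hi i) < 0"
proof (cases "2 * i < n")
  case True
  have "N - i = Suc ((n - 2 * i) div 2)" using True unfolding N_def by presburger
  then show ?thesis using sign_U_Suc_at_even[OF True] True by (simp add: hi_def)
next
  case False
  then have "N - i = 1" using double_le_n[OF assms] unfolding N_def by presburger
  then show ?thesis using False poly_U_x0_pos by (simp add: hi_def)
qed

lemma lo_ge_u: "i < N \<Longrightarrow> u \<le> lo i"
proof (cases "i = 0")
  case False
  assume "i < N"
  then have "2 * i - 2 < n" using double_le_n n_pos by fastforce
  then show ?thesis using interlaced_range[OF interlaced_t] False by (simp add: lo_def less_imp_le)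
qed (simp add: lo_def)

lemma hi_le_x0: "hi i \<le> x0"
  using interlaced_range[OF interlaced_t, of "2 * i"] by (auto simp: hi_def)

lemma lo_less_hi: "i < N \<Longrightarrow> lo i < hi i"
  using double_le_n[of i] interlaced_range[OF interlaced_t] n_pos u_less_x0 t_less_iff
  by (auto simp: lo_def hi_def)

lemma bracket_has_root: "i < N \<Longrightarrow> \<exists>x. lo i < x \<and> x < hi i \<and> poly (U (Suc n)) x = 0"
proof -
  assume i: "i < N"
  have "poly (U (Suc n)) (lo i) * poly (U (Suc n)) (hi i) < 0"
    using lo_sign[OF i] hi_sign[OF i]
    by (cases "even (N - i)") (auto simp: mult_pos_neg mult_neg_pos)
  then show ?thesis using poly_IVT[OF lo_less_hi[OF i]] by blast
qed

definition q :: "nat \<Rightarrow> real" where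
  "q i = (SOME x. lo i < x \<and> x < hi i \<and> poly (U (Suc n)) x = 0)"

lemma q_in_bracket: "i < N \<Longrightarrow> lo i < q i \<and> q i < hi i \<and> poly (U (Suc n)) (q i) = 0"
  unfolding q_def by (rule someI_ex[OF bracket_has_root])

lemma U_no_root_in_bracket:
  assumes i: "i < N" and x: "lo i < x" "x < hi i"
  shows "poly (U n) x \<noteq> 0"
proof
  assume "poly (U n) x = 0"
  then obtain j where j: "j < (n + 1) div 2" "x = t (2 * j)"
    using interlaced_roots(1)[OF interlaced_t n_pos] by blast
  have "2 * j < n" using j(1) by presburger
  have "i \<le> j"
    using x(1) j(2) t_less_iff[of "2 * i - 2" "2 * j"] \<open>2 * j < n\<close> double_le_n[OF i]
    by (cases "i = 0") (auto simp: lo_def)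
  moreover have "j < i"
    using x(2) j(2) t_less_iff[of "2 * j" "2 * i"] \<open>2 * j < n\<close>
    by (cases "2 * i < n") (auto simp: hi_def)
  ultimately show False by simp
qed

lemma sign_U_in_bracket:
  assumes i: "i < N" and x: "lo i < x" "x < hi i"
  shows "(-1) ^ ((Suc n - 2 * i) div 2) * poly (U n) x > 0"
proof -
  obtain r where r: "(-1) ^ ((Suc n - 2 * i) div 2) * poly (U n) r > 0"
    and between: "\<And>z. min r x \<le> z \<Longrightarrow> z \<le> max r x \<Longrightarrow> poly (U n) z \<noteq> 0"
  proof (cases "i = 0")
    case True
    show ?thesis
    proof
      show "(-1) ^ ((Suc n - 2 * i) div 2) * poly (U n) u > 0" using sign_U_u True by simp
      fix z assume "min u x \<le> z" "z \<le> max u x"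
      then show "poly (U n) z \<noteq> 0"
        using sign_U_u[of n] U_no_root_in_bracket[OF i, of z] x True
        by (cases "z = u") (auto simp: lo_def)
    qed
  next
    case False
    have j: "2 * i - 1 < n" "odd (2 * i - 1)" "n - (2 * i - 1) = Suc n - 2 * i"
      using double_le_n[OF i] False by auto
    have r: "lo i < t (2 * i - 1)" "t (2 * i - 1) < hi i"
      using False j t_less_iff[of "2 * i - 2" "2 * i - 1"] t_less_iff[of "2 * i - 1" "2 * i"]
        interlaced_range[OF interlaced_t j(1)] by (auto simp: lo_def hi_def)
    show ?thesis
    proof (rule that)
      show "(-1) ^ ((Suc n - 2 * i) div 2) * poly (U n) (t (2 * i - 1)) > 0"
        using interlaced_odd[OF interlaced_t j(1,2)] j(3) by simp
      fix z assume "min (t (2 * i - 1)) x \<le> z" "z \<le> max (t (2 * i - 1)) x"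
      then show "poly (U n) z \<noteq> 0"
        using U_no_root_in_bracket[OF i] x r by (auto simp: min_def max_def split: if_splits)
    qed
  qed
  have "poly (U n) r * poly (U n) x > 0" by (rule poly_same_sign_if_no_root[OF between])
  with r show ?thesis
    by (cases "even ((Suc n - 2 * i) div 2)") (auto simp: zero_less_mult_iff)
qed

definition t_next :: "nat \<Rightarrow> real" where
  "t_next j = (if even j then q (j div 2) else t (j - 1))"

lemma t_next_mono: "strict_mono_on {..<Suc n} t_next"
proof (rule strict_mono_on_lessThanI)
  fix j assume j: "Suc j < Suc n"
  show "t_next j < t_next (Suc j)"
  proof (cases "even j")
    case True
    have "j div 2 < N" "2 * (j div 2) = j" using j True unfolding N_def by auto
    then show ?thesis using q_in_bracket[of "j div 2"] j True by (simp add: t_next_def hi_def)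
  next
    case False
    have "Suc j div 2 < N" "2 * (Suc j div 2) - 2 = j - 1" "Suc j div 2 \<noteq> 0"
      using j False unfolding N_def by presburger+
    then show ?thesis using q_in_bracket[of "Suc j div 2"] False by (simp add: t_next_def lo_def)
  qed
qed

lemma t_next_range: "j < Suc n \<Longrightarrow> u < t_next j \<and> t_next j < x0"
proof (cases "even j")
  case True
  assume "j < Suc n"
  then have "j div 2 < N" unfolding N_def by presburger
  then show ?thesis
    using q_in_bracket[of "j div 2"] lo_ge_u[of "j div 2"] hi_le_x0[of "j div 2"] True
    by (simp add: t_next_def)
next
  case False
  assume "j < Suc n"
  then have "j - 1 < n" using n_pos by linarith
  then show ?thesis using interlaced_range[OF interlaced_t, of "j - 1"] False
    by (simp add: t_next_def)
qed

lemma t_next_even: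
  assumes j: "j < Suc n" "even j"
  shows "poly (U (Suc n)) (t_next j) = 0 \<and>
    (-1) ^ ((Suc n - j) div 2) * poly (U (Suc n - 1)) (t_next j) > 0"
proof -
  have i: "j div 2 < N" "2 * (j div 2) = j" using j unfolding N_def by presburger+
  then show ?thesis
    using q_in_bracket[OF i(1)] sign_U_in_bracket[OF i(1), of "q (j div 2)"] j(2)
    by (simp add: t_next_def)
qed

lemma t_next_odd:
  assumes j: "j < Suc n" "odd j"
  shows "poly (U (Suc n - 1)) (t_next j) = 0 \<and>
    (-1) ^ ((Suc n - j) div 2) * poly (U (Suc n)) (t_next j) > 0"
proof -
  have j': "j - 1 < n" "even (j - 1)" and e: "n - (j - 1) = Suc n - j" using j by presburger+
  show ?thesis
    using interlaced_even[OF interlaced_t j'] sign_U_Suc_at_even[OF j'] j(2)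
    unfolding e by (simp add: t_next_def)
qed

lemma interlaced_next: "interlaced (Suc n) t_next"
  unfolding interlaced_def using t_next_mono t_next_range t_next_even t_next_odd by blast

end

context alternating_recurrence_lower_bound
begin

lemma interlaced_exists: "n \<ge> 1 \<Longrightarrow> \<exists>t. interlaced n t"
proof (induction n rule: dec_induct)
  case base
  then show ?case using interlaced_one by blast
next
  case (step n)
  then obtain t where t: "interlaced n t" by blast
  interpret interlacing_step a b k u n t
    by unfold_locales (use step(1) t a_pos b_neg k_pos u_less_x0 alternating_u in auto)
  show ?case using interlaced_next by blast
qed

lemma U_roots_between: "poly (U n) x = 0 \<Longrightarrow> u < x \<and> x < x0"
proof (cases "n = 0")
  case False
  then obtain t where t: "interlaced n t" using interlaced_exists by fastforce
  assume "poly (U n) x = 0"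
  then obtain i where "i < (n + 1) div 2" "x = t (2 * i)"
    using interlaced_roots(1)[OF t] False by auto
  moreover from this have "2 * i < n" by presburger
  ultimately show ?thesis using interlaced_range[OF t] by blast
qed simp

lemma card_U_roots: "card {x::real. poly (U n) x = 0} = (n + 1) div 2"
proof (cases "n = 0")
  case False
  then have "n \<ge> 1" by simp
  then obtain t where "interlaced n t" using interlaced_exists by blast
  then show ?thesis using interlaced_roots(3) \<open>n \<ge> 1\<close> by blast
qed simp

lemma U_roots_nonempty:
  assumes "n \<ge> 1"
  shows "{x::real. poly (U n) x = 0} \<noteq> {}"
proof
  assume "{x::real. poly (U n) x = 0} = {}"
  then have "(n + 1) div 2 = 0" using card_U_roots[of n] by simp
  then show False using assms by simp
qed

lemma
  fixes z :: "'a::real_field"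
  shows root_U_real: "poly (U n) z = 0 \<Longrightarrow> z \<in> of_real ` {x. poly (U n) x = 0}"
    and degree_U: "degree (U n :: 'a poly) = (n + 1) div 2"
proof -
  let ?R = "of_real ` {x. poly (U n) x = 0} :: 'a set"
  have card: "card ?R = (n + 1) div 2"
    using card_U_roots by (simp add: card_image inj_on_def)
  have fin: "finite ?R" using poly_roots_finite[OF U_nonzero] by blast
  have roots: "{z :: 'a. poly (U n) z = 0} = ?R"
    using degree_U_le[of n] card fin
    by (intro poly_roots_eq_if_card_ge_degree U_nonzero) (auto simp: poly_U_of_real)
  then show "poly (U n) z = 0 \<Longrightarrow> z \<in> ?R" by blast
  have "card {z :: 'a. poly (U n) z = 0} \<le> degree (U n :: 'a poly)"
    by (rule card_poly_roots_bound[OF U_nonzero])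
  then have "card ?R \<le> degree (U n :: 'a poly)" unfolding roots .
  then show "degree (U n :: 'a poly) = (n + 1) div 2"
    using card degree_U_le[where 'a='a, of n] by simp
qed

lemma exists_smaller_root:
  assumes "poly (U n) (r::real) = 0"
  shows "\<exists>r'. poly (U (Suc n)) r' = 0 \<and> r' < r"
proof -
  obtain t where t: "interlaced (Suc n) t" using interlaced_exists[of "Suc n"] by auto
  obtain i where i: "i < Suc n div 2" "r = t (Suc (2 * i))"
    using interlaced_roots(2)[OF t] assms by auto
  then have "t 0 < r" using strict_mono_onD[OF interlaced_mono[OF t], of 0 "Suc (2 * i)"] by simp
  then show ?thesis using interlaced_even[OF t, of 0] by auto
qed

lemma exists_larger_root:
  assumes "poly (U (2 * m)) (r::real) = 0"
  shows "\<exists>r'. poly (U (Suc (2 * m))) r' = 0 \<and> r < r'"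
proof -
  obtain t where t: "interlaced (Suc (2 * m)) t" using interlaced_exists[of "Suc (2 * m)"] by auto
  obtain i where i: "i < m" "r = t (Suc (2 * i))"
    using interlaced_roots(2)[OF t] assms by auto
  then have "r < t (2 * m)" using strict_mono_onD[OF interlaced_mono[OF t]] by simp
  then show ?thesis using interlaced_even[OF t, of "2 * m"] by auto
qed

lemma exists_smaller_root_later:
  assumes "poly (U n) (r::real) = 0" "n \<le> n'"
  shows "\<exists>r'. poly (U n') r' = 0 \<and> r' \<le> r"
  using assms(2)
proof (induction n' rule: dec_induct)
  case (step n')
  then obtain r' where r': "poly (U n') r' = 0" "r' \<le> r" by blast
  obtain r'' where "poly (U (Suc n')) r'' = 0" "r'' < r'"
    using exists_smaller_root[OF r'(1)] by blast
  then show ?case using r'(2) by (intro exI[of _ r'']) simp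
qed (use assms(1) in auto)

lemma exists_root_right_of_u:
  assumes "(-1) ^ ((n + 1) div 2) * poly (U n) y \<le> 0" "u < y"
  shows "\<exists>r. u < r \<and> r \<le> y \<and> poly (U n) r = 0"
proof (cases "poly (U n) y = 0")
  case False
  have "poly (U n) u * poly (U n) y < 0"
    using sign_U_u[of n] assms(1) False
    by (cases "even ((n + 1) div 2)") (auto simp: mult_pos_neg mult_neg_pos)
  then show ?thesis using poly_IVT[OF assms(2)] by (meson less_imp_le)
qed (use assms in auto)

lemma max_root_tendsto_x0: "(\<lambda>n. Max {x. poly (U n) x = 0}) \<longlonglongrightarrow> x0"
proof (rule order_tendstoI)
  have fin: "finite {x::real. poly (U n) x = 0}" for n by (rule poly_roots_finite[OF U_nonzero])
  fix c assume "c < x0"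
  then obtain M where M: "\<And>m. m \<ge> M \<Longrightarrow> c < chebyshev_node m"
    using order_tendstoD(1)[OF chebyshev_node_tendsto] unfolding eventually_sequentially by blast
  have "c < Max {x. poly (U n) x = 0}" if n: "n \<ge> 2 * max M 2" for n
  proof -
    define m where "m = n div 2"
    have m: "m \<ge> 2" "m \<ge> M" using n unfolding m_def by auto
    obtain r where r: "chebyshev_node m < r" "poly (U (2 * m)) r = 0"
      using exists_root_above_chebyshev_node[OF m(1)] by blast
    have "\<exists>r'. poly (U n) r' = 0 \<and> r \<le> r'"
    proof (cases "even n")
      case True
      then show ?thesis using r(2) unfolding m_def by auto
    next
      case False
      then have "n = Suc (2 * m)" unfolding m_def by presburger
      then show ?thesis using exists_larger_root[OF r(2)] by (auto intro: less_imp_le)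
    qed
    then show ?thesis using Max_ge[OF fin] M[OF m(2)] r(1) by force
  qed
  then show "\<forall>\<^sub>F n in sequentially. c < Max {x. poly (U n) x = 0}"
    unfolding eventually_sequentially by blast
next
  fix c assume "x0 < c"
  have "Max {x. poly (U n) x = 0} < c" if "n \<ge> 1" for n
    using Max_in[OF poly_roots_finite[OF U_nonzero] U_roots_nonempty[OF that]] U_roots_between
      \<open>x0 < c\<close> by fastforce
  then show "\<forall>\<^sub>F n in sequentially. Max {x. poly (U n) x = 0} < c"
    unfolding eventually_sequentially by blast
qed

lemma min_root_tendsto_u:
  assumes "\<And>\<epsilon>. \<epsilon> > 0 \<Longrightarrow> \<exists>y. u < y \<and> y < u + \<epsilon> \<and> \<not> alternating_at y"
  shows "(\<lambda>n. Min {x. poly (U n) x = 0}) \<longlonglongrightarrow> u"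
proof (rule order_tendstoI)
  fix c assume "c < u"
  have "c < Min {x. poly (U n) x = 0}" if "n \<ge> 1" for n
    using Min_in[OF poly_roots_finite[OF U_nonzero] U_roots_nonempty[OF that]] U_roots_between
      \<open>c < u\<close> by fastforce
  then show "\<forall>\<^sub>F n in sequentially. c < Min {x. poly (U n) x = 0}"
    unfolding eventually_sequentially by blast
next
  fix c assume "u < c"
  then obtain y where y: "u < y" "y < c" "\<not> alternating_at y"
    using assms[of "c - u"] by auto
  then obtain n0 where "(-1) ^ ((n0 + 1) div 2) * poly (U n0) y \<le> 0"
    unfolding alternating_at_def by (auto simp: not_less)
  then obtain r where r: "r \<le> y" "poly (U n0) r = 0"
    using exists_root_right_of_u y(1) by blast
  have "Min {x. poly (U n) x = 0} < c" if n: "n \<ge> n0" for n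
  proof -
    obtain r' where "poly (U n) r' = 0" "r' \<le> r" using exists_smaller_root_later[OF r(2) n] by blast
    then show ?thesis using Min_le[OF poly_roots_finite[OF U_nonzero]] r(1) y(2) by force
  qed
  then show "\<forall>\<^sub>F n in sequentially. Min {x. poly (U n) x = 0} < c"
    unfolding eventually_sequentially by blast
qed

end

locale proportional_coefficients = alternating_recurrence +
  fixes c d :: real
  assumes c_eq: "c = a * k" and d_eq: "d = b * k"
begin

lemma Wpoly_eq: "Wpoly a b c d n = Apoly a b ^ (n div 2) * U n"
proof (induction n rule: U.induct)
  case (3 n)
  define A where "A = Apoly a b"
  define m where "m = n div 2"
  have B: "[:complex_of_real d, complex_of_real c:] = smult (of_real k) A"
    by (simp add: A_def Apoly_def c_eq d_eq)
  have W: "Wpoly a b c d (Suc (Suc n)) =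
      A * Wpoly a b c d (Suc n) + smult (of_real k) (A * Wpoly a b c d n)"
    by (simp only: Wpoly.simps B A_def Apoly_def mult_smult_left)
  show ?case
  proof (cases "even n")
    case True
    then have "Suc n div 2 = m" "Suc (Suc n) div 2 = Suc m" unfolding m_def by presburger+
    then have "Wpoly a b c d (Suc (Suc n)) =
        A ^ Suc m * (U (Suc n) + smult (of_real k) (U n))"
      unfolding W 3 A_def[symmetric] m_def[symmetric] by (simp add: algebra_simps)
    then show ?thesis using True \<open>Suc (Suc n) div 2 = Suc m\<close> by (simp add: A_def)
  next
    case False
    then have "Suc n div 2 = Suc m" "Suc (Suc n) div 2 = Suc m" unfolding m_def by presburger+
    then have "Wpoly a b c d (Suc (Suc n)) =
        A ^ Suc m * (A * U (Suc n) + smult (of_real k) (U n))"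
      unfolding W 3 A_def[symmetric] m_def[symmetric] by (simp add: algebra_simps)
    then show ?thesis using False \<open>Suc (Suc n) div 2 = Suc m\<close> by (simp add: A_def Apoly_def)
  qed
qed simp_all

lemma Upoly_eq: "Upoly a b c d = U"
  using a_pos by (simp add: Upoly_def Wpoly_eq Apoly_def fun_eq_iff)

lemma d_neg: "d < 0"
  using b_neg k_pos by (simp add: d_eq mult_neg_pos)

lemma x0_eq_xB: "x0 = xB c d"
  using a_pos k_pos by (simp add: x0_def xB_def c_eq d_eq)

lemma a_x0: "a * x0 = - b"
  using A_factor[of 0] by simp

lemma Fval_eq: "Fval a b c d = a * x0 * (a * x0 - 2 * k * (2 - a))"
  unfolding Fval_def c_eq d_eq a_x0 by (simp add: algebra_simps power2_eq_square)

lemma Delta_g_eq: "Delta_g a b c d = Fval a b c d + c\<^sup>2"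
  by (simp add: Fval_def Delta_g_def c_eq d_eq algebra_simps power2_eq_square)

lemma xDelta_minus_eq: "xDelta_minus a b c d = x0 - 4 * k / a"
proof -
  have xA: "xA a b = x0" by (simp add: xA_def x0_def)
  have "c * x0 + d = k * (a * x0 + b)" by (simp add: c_eq d_eq algebra_simps)
  then have "DeltaDelta a b c d = c\<^sup>2" using A_factor[of x0] by (simp add: DeltaDelta_def xA)
  then have "sqrt (DeltaDelta a b c d) = c" using a_pos k_pos by (simp add: c_eq)
  moreover have "(- 2 * c - 2 * c) / a\<^sup>2 = - 4 * k / a"
    using a_pos by (simp add: c_eq power2_eq_square)
  ultimately show ?thesis by (simp add: xDelta_minus_def xA)
qed

abbreviation (input) u :: real where "u \<equiv> uval a b c d"

lemma uval_F_nonpos: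
  assumes "Fval a b c d \<le> 0"
  shows "u = x0 - 4 * k / a" and "2 * k \<le> - u"
proof -
  have ax0: "a * x0 > 0" using a_pos x0_pos by simp
  have "a * x0 * (a * x0 - 2 * k * (2 - a)) \<le> a * x0 * 0" using assms by (simp only: Fval_eq)
  then have h: "a * x0 \<le> 2 * k * (2 - a)" by (simp only: mult_le_cancel_left_pos[OF ax0])
  then have "2 * k * (2 - a) > 0" using ax0 by linarith
  then have "a < 2" using k_pos by (simp add: zero_less_mult_iff)
  then show u: "u = x0 - 4 * k / a" using assms by (simp add: uval_def xDelta_minus_eq)
  have "a * (2 * k) \<le> a * (4 * k / a - x0)"
    using a_pos h by (simp add: right_diff_distrib algebra_simps)
  then show "2 * k \<le> - u" using a_pos unfolding u by simp
qed

text \<open>The quadratic \<open>g\<close> of the paper; \<open>g y\<close> is the value at \<open>\<rho> = -y\<close> of the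
  quadratic \<open>\<rho>\<^sup>2 - \<alpha> \<rho> + \<alpha> k\<close>, \<open>\<alpha> = -A(y)\<close>, governing the coupled recurrence at \<open>y\<close>.\<close>

definition g :: "real \<Rightarrow> real" where "g z = (1 - a) * z\<^sup>2 - (b + c) * z - d"

lemma g_eq: "g y = (- y)\<^sup>2 - a * (x0 - y) * (- y) + a * (x0 - y) * k"
proof -
  have "a * (x0 - y) = - (a * y + b)" unfolding A_factor by (simp add: algebra_simps)
  then show ?thesis unfolding g_def by (simp add: c_eq d_eq algebra_simps power2_eq_square)
qed

lemma g_expand: "g y = g z + (2 * (1 - a) * z - (b + c)) * (y - z) + (1 - a) * (y - z)\<^sup>2"
  by (simp add: g_def algebra_simps power2_eq_square)

lemma b_plus_c_neg:
  assumes F: "Fval a b c d > 0" and a: "a \<le> 1"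
  shows "b + c < 0"
proof -
  have ax0: "a * x0 > 0" using a_pos x0_pos by simp
  have "a * x0 * 0 < a * x0 * (a * x0 - 2 * k * (2 - a))" using F by (simp only: Fval_eq)
  then have "a * x0 - 2 * k * (2 - a) > 0" by (simp only: mult_less_cancel_left_pos[OF ax0])
  moreover have "2 * k * 1 \<le> 2 * k * (2 - a)" using a k_pos by (intro mult_left_mono) auto
  moreover have "a * k \<le> 1 * k" using a k_pos by (intro mult_right_mono) auto
  ultimately show ?thesis using a_x0 k_pos unfolding c_eq by linarith
qed

lemma g_uval:
  assumes F: "Fval a b c d > 0"
  shows "g u = 0" and "2 * (1 - a) * u - (b + c) > 0"
proof -
  have "c > 0" using a_pos k_pos by (simp add: c_eq)
  then have D: "Delta_g a b c d > 0" using F by (simp add: Delta_g_eq add_pos_pos)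
  have "g u = 0 \<and> 2 * (1 - a) * u - (b + c) > 0"
  proof (cases "a = 1")
    case True
    then show ?thesis using F b_plus_c_neg[OF F] unfolding g_def
      by (simp add: uval_def xg_minus_def field_simps)
  next
    case False
    have "u = (b + c) / (2 * (1 - a)) + sqrt (Delta_g a b c d) / (2 * (1 - a))"
      using F False
      by (cases "a < 1") (auto simp: uval_def xg_plus_def xg_minus_def minus_divide_right)
    then have u: "2 * (1 - a) * u - (b + c) = sqrt (Delta_g a b c d)"
      using False by (simp add: add_divide_distrib[symmetric])
    have "4 * (1 - a) * g u = (2 * (1 - a) * u - (b + c))\<^sup>2 - Delta_g a b c d"
      by (simp add: g_def Delta_g_def algebra_simps power2_eq_square)
    then show ?thesis using u D False by simp
  qed
  then show "g u = 0" and "2 * (1 - a) * u - (b + c) > 0" by blast+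
qed

lemma uval_neg: "Fval a b c d > 0 \<Longrightarrow> u < 0"
proof (rule ccontr)
  assume F: "Fval a b c d > 0" and "\<not> u < 0"
  then have u: "u \<ge> 0" by simp
  have g0: "g 0 > 0" using d_neg by (simp add: g_def)
  show False
  proof (cases "a \<le> 1")
    case True
    have "(1 - a) * u\<^sup>2 \<ge> 0" "(b + c) * u \<le> 0"
      using True u b_plus_c_neg[OF F True] by (simp_all add: mult_nonpos_nonneg)
    then have "g u > 0" using d_neg by (simp add: g_def)
    then show False using g_uval(1)[OF F] by simp
  next
    case False
    have "(1 - a) * (0 - u)\<^sup>2 \<le> 0" using False by (simp add: mult_nonpos_nonneg)
    moreover have "(2 * (1 - a) * u - (b + c)) * (0 - u) \<le> 0"
      using g_uval(2)[OF F] u by (simp add: mult_nonneg_nonpos)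
    ultimately have "g 0 \<le> 0" using g_expand[of 0 u] g_uval(1)[OF F] by linarith
    then show False using g0 by simp
  qed
qed

lemma g_pos_right_of_uval:
  assumes F: "Fval a b c d > 0" and y: "u < y" "y \<le> 0"
  shows "g y > 0"
proof -
  define L where "L z = 2 * (1 - a) * u - (b + c) + (1 - a) * (z - u)" for z
  have g: "g z = (z - u) * L z" for z
    using g_expand[of z u] g_uval(1)[OF F] by (simp add: L_def algebra_simps power2_eq_square)
  have Lu: "L u > 0" using g_uval(2)[OF F] by (simp add: L_def)
  have "g 0 > 0" using d_neg by (simp add: g_def)
  then have L0: "L 0 > 0"
    using uval_neg[OF F] g[of 0] by (auto simp: zero_less_mult_iff mult_less_0_iff)
  have "L y > 0"
  proof (cases "a \<le> 1")
    case True
    then have "L y \<ge> L u" using y by (simp add: L_def)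
    then show ?thesis using Lu by simp
  next
    case False
    then have "(a - 1) * y \<le> 0" using y by (simp add: mult_nonneg_nonpos)
    then have "L y \<ge> L 0" by (simp add: L_def algebra_simps)
    then show ?thesis using L0 by simp
  qed
  then show ?thesis using g y(1) by simp
qed

lemma uval_bound: "Fval a b c d > 0 \<Longrightarrow> (a - 2) * u + b < 0"
proof (cases "a < 2")
  case True
  assume F: "Fval a b c d > 0"
  define w where "w = b / (2 - a)"
  have b: "b = (2 - a) * w" using True by (simp add: w_def)
  have "(2 - a)\<^sup>2 * g w = - Fval a b c d"
    unfolding g_def Fval_def unfolding c_eq d_eq b by (simp add: algebra_simps power2_eq_square)
  then have gw: "g w < 0" using F by (smt (verit) mult_nonneg_nonneg zero_le_power2)
  have "w < 0" using b_neg True by (simp add: w_def divide_neg_pos)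
  moreover have "w \<noteq> u" using g_uval(1)[OF F] gw by auto
  ultimately have "w < u" using g_pos_right_of_uval[OF F, of w] gw by fastforce
  then have "(2 - a) * w < (2 - a) * u" using True by simp
  moreover have "(a - 2) * u = - ((2 - a) * u)" by (simp add: algebra_simps)
  ultimately show ?thesis using b by linarith
next
  case False
  assume F: "Fval a b c d > 0"
  then show ?thesis using False uval_neg[OF F] b_neg by (smt (verit) mult_nonneg_nonpos)
qed

lemma uval_less_x0: "u < x0"
  using uval_F_nonpos(1) uval_neg x0_pos a_pos k_pos by (cases "Fval a b c d \<le> 0") auto

lemma alternating_at_uval: "alternating_at u"
proof (cases "Fval a b c d \<le> 0")
  case True
  have "a * (x0 - u) = 4 * k" using a_pos by (simp add: uval_F_nonpos(1)[OF True])
  then show ?thesis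
    using alternating_at_if_root_below[OF uval_less_x0, of "2 * k"] uval_F_nonpos(2)[OF True]
    by (simp add: power2_eq_square)
next
  case False
  then show ?thesis
    using alternating_at_if_root_below[OF uval_less_x0, of "- u"] g_uval(1) g_eq[of u] by simp
qed

sublocale alternating_recurrence_lower_bound a b k u
  using uval_less_x0 alternating_at_uval by unfold_locales

lemma not_alternating_right_of_uval_F_nonpos:
  assumes F: "Fval a b c d \<le> 0" and y: "u < y" "y < x0"
  shows "\<not> alternating_at y"
proof -
  define \<alpha> where "\<alpha> = a * (x0 - y)"
  have \<alpha>: "0 < \<alpha>" "\<alpha> < 4 * k"
    using y a_pos uval_F_nonpos(1)[OF F] by (simp_all add: \<alpha>_def field_simps)
  show ?thesis
  proof (rule not_alternating_at[OF y(2)])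
    show "\<alpha> * (4 * k - \<alpha>) / 4 > 0" using \<alpha> by simp
    fix \<rho>
    have "\<rho>\<^sup>2 - \<alpha> * \<rho> + \<alpha> * k - \<alpha> * (4 * k - \<alpha>) / 4 = (\<rho> - \<alpha> / 2)\<^sup>2"
      by (simp add: power2_eq_square field_simps)
    then show "\<alpha> * (4 * k - \<alpha>) / 4 \<le> \<rho>\<^sup>2 - a * (x0 - y) * \<rho> + a * (x0 - y) * k"
      unfolding \<alpha>_def[symmetric] by (smt (verit) zero_le_power2)
  qed
qed

lemma not_alternating_right_of_uval_F_pos:
  assumes F: "Fval a b c d > 0" and y: "u < y" "y < 0" "(a - 2) * y + b < 0"
  shows "\<not> alternating_at y"
proof (rule not_alternating_at)
  show "y < x0" using y x0_pos by simp
  show "g y > 0" using g_pos_right_of_uval F y by simp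
  fix \<rho> assume \<rho>: "k < \<rho>" "\<rho> \<le> - y"
  have "\<rho>\<^sup>2 - a * (x0 - y) * \<rho> + a * (x0 - y) * k - g y = (\<rho> + y) * (\<rho> - y - a * (x0 - y))"
    unfolding g_eq by (simp add: algebra_simps power2_eq_square)
  moreover have "\<rho> - y - a * (x0 - y) < 0"
    using \<rho> y(3) A_factor[of y] by (simp add: algebra_simps)
  ultimately show "g y \<le> \<rho>\<^sup>2 - a * (x0 - y) * \<rho> + a * (x0 - y) * k"
    using \<rho> by (smt (verit) mult_nonpos_nonpos)
qed

lemma not_alternating_near_uval:
  assumes "\<epsilon> > 0"
  shows "\<exists>y. u < y \<and> y < u + \<epsilon> \<and> \<not> alternating_at y"
proof -
  have bound: "\<forall>\<^sub>F y in at_right u. Fval a b c d > 0 \<longrightarrow> (a - 2) * y + b < 0"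
  proof (cases "Fval a b c d > 0")
    case True
    have "((\<lambda>y. (a - 2) * y + b) \<longlongrightarrow> (a - 2) * u + b) (at_right u)"
      by (intro tendsto_intros)
    from order_tendstoD(2)[OF this uval_bound[OF True]] show ?thesis
      by (rule eventually_mono) simp
  qed simp
  define m where "m = min (u + \<epsilon>) (if Fval a b c d > 0 then 0 else x0)"
  have "u < m" using assms uval_less_x0 uval_neg by (simp add: m_def)
  then have "\<forall>\<^sub>F y in at_right u. y < m" by (rule order_tendstoD(2)[OF tendsto_ident_at])
  then have "\<forall>\<^sub>F y in at_right u.
      u < y \<and> y < m \<and> (Fval a b c d > 0 \<longrightarrow> (a - 2) * y + b < 0)"
    using bound by (intro eventually_conj eventually_at_right_less)
  then obtain y where "u < y" "y < m" "Fval a b c d > 0 \<Longrightarrow> (a - 2) * y + b < 0"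
    using eventually_happens'[OF trivial_limit_at_right_real] by blast
  then show ?thesis
    using not_alternating_right_of_uval_F_nonpos not_alternating_right_of_uval_F_pos
    by (cases "Fval a b c d > 0") (auto simp: m_def not_less)
qed

lemma limit_of_zeros_of_real:
  assumes "\<And>n. n \<ge> 1 \<Longrightarrow> poly (U n) (z n) = (0::real)" and "z \<longlonglongrightarrow> w"
  shows "limit_of_zeros U (of_real w)"
  unfolding limit_of_zeros_def
  using assms by (intro exI[of _ "\<lambda>n. of_real (z n)"]) (auto simp: poly_U_of_real tendsto_of_real)

lemma limit_of_zeros_uval: "limit_of_zeros U (of_real u)"
  using Min_in[OF poly_roots_finite[OF U_nonzero] U_roots_nonempty]
  by (intro limit_of_zeros_of_real[OF _ min_root_tendsto_u[OF not_alternating_near_uval]]) auto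

lemma limit_of_zeros_x0: "limit_of_zeros U (of_real x0)"
  using Max_in[OF poly_roots_finite[OF U_nonzero] U_roots_nonempty]
  by (intro limit_of_zeros_of_real[OF _ max_root_tendsto_x0]) auto

end

theorem theorem3p6:
  fixes a b c d :: real
  assumes "a > 0" and "c > 0" and "b < 0" and "d < 0"
    and "xA a b = xB c d"
  shows "(\<forall>n. Apoly a b ^ (n div 2) dvd Wpoly a b c d n
            \<and> degree (Upoly a b c d n) = (n + 1) div 2
            \<and> (\<forall>z. poly (Upoly a b c d n) z = 0 \<longrightarrow>
                  z \<in> \<real> \<and> uval a b c d < Re z \<and> Re z < xB c d))
         \<and> limit_of_zeros (Upoly a b c d) (complex_of_real (uval a b c d))
         \<and> limit_of_zeros (Upoly a b c d) (complex_of_real (xB c d))"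
proof -
  interpret proportional_coefficients a b "c / a" c d
  proof unfold_locales
    have "d / c = b / a" using assms(5) by (simp add: xA_def xB_def)
    have "d = d / c * c" using assms(2) by simp
    also have "\<dots> = b * (c / a)" unfolding \<open>d / c = b / a\<close> by simp
    finally show "d = b * (c / a)" .
  qed (use assms in simp_all)
  have roots: "z \<in> \<real> \<and> uval a b c d < Re z \<and> Re z < xB c d"
    if z: "poly (U n) z = 0" for n z
  proof -
    obtain x where "z = of_real x" "poly (U n) x = 0" using root_U_real[OF z] by blast
    then show ?thesis using U_roots_between x0_eq_xB by auto
  qed
  have "Apoly a b ^ (n div 2) dvd Wpoly a b c d n" for n
    unfolding Wpoly_eq by (rule dvd_triv_left)
  then show ?thesis
    unfolding Upoly_eq
    using degree_U roots limit_of_zeros_uval limit_of_zeros_x0[unfolded x0_eq_xB] by blast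
qed

end
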